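(* Let $d\ge 3$, $n\ge 2$, and let $F$ be an $n$-lattice framework in $\mathbb{R}^d$. If for every $1\le i\le d$ and every $0\le c\le n-1$ the framework $F'_{i,c}$ in $\mathbb{R}^{d-1}$ is infinitesimally rigid, then $F$ is infinitesimally rigid.
   Context: A framework in $\mathbb{R}^d$ is a finite graph whose vertices (joints) are distinct points of $\mathbb{R}^d$ and whose edges (bars) are segments between pairs of joints. An infinitesimal motion of $\mathbb{R}^d$ is a map $f:\mathbb{R}^d\to\mathbb{R}^d$ with $(f(x)-f(y))\cdot(x-y)=0$ for all $x,y$. For a framework $F$ with joint set $X$, an infinitesimal motion of $F$ is a map $g:X\to\mathbb{R}^d$ with $(g(x)-g(y))\cdot(x-y)=0$ for every bar $xy$; $F$ is infinitesimally rigid if every infinitesimal motion of $F$ is the restriction to $X$ of an infinitesimal motion of $\mathbb{R}^d$. An $n$-lattice framework in $\mathbb{R}^d$ is a framework whose joints are the points $(x_1,\ldots,x_d)$ with all $x_i\in\{0,1,\ldots,n-1\}$ (bars arbitrary). For such $F$, $F_{i,c}$ is the subframework induced by all joints whose $i$-th coordinate equals $c$, and $F'_{i,c}$ is the framework in $\mathbb{R}^{d-1}$ obtained from $F_{i,c}$ by deleting the $i$-th coordinate of every joint (keeping the same bars); it is an $n$-lattice framework in $\mathbb{R}^{d-1}$. *)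

theory Defs
  imports Complex_Main
begin

text \<open>Points of R^d are represented as functions nat => real that vanish at
  all coordinates >= d (coordinates are indexed 0..d-1).\<close>

definition rvec :: "nat \<Rightarrow> (nat \<Rightarrow> real) set" where
  "rvec d = {x. \<forall>i\<ge>d. x i = 0}"

definition ip :: "nat \<Rightarrow> (nat \<Rightarrow> real) \<Rightarrow> (nat \<Rightarrow> real) \<Rightarrow> real" where
  "ip d x y = (\<Sum>i<d. x i * y i)"

definition space_motion :: "nat \<Rightarrow> ((nat \<Rightarrow> real) \<Rightarrow> (nat \<Rightarrow> real)) \<Rightarrow> bool" where
  "space_motion d f \<longleftrightarrow>
     (\<forall>x\<in>rvec d. f x \<in> rvec d) \<and>
     (\<forall>x\<in>rvec d. \<forall>y\<in>rvec d. ip d (f x - f y) (x - y) = 0)"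

definition framework_motion ::
  "nat \<Rightarrow> (nat \<Rightarrow> real) set \<Rightarrow> ((nat \<Rightarrow> real) \<times> (nat \<Rightarrow> real)) set
   \<Rightarrow> ((nat \<Rightarrow> real) \<Rightarrow> (nat \<Rightarrow> real)) \<Rightarrow> bool" where
  "framework_motion d X E g \<longleftrightarrow>
     (\<forall>x\<in>X. g x \<in> rvec d) \<and>
     (\<forall>(x, y)\<in>E. ip d (g x - g y) (x - y) = 0)"

definition inf_rigid ::
  "nat \<Rightarrow> (nat \<Rightarrow> real) set \<Rightarrow> ((nat \<Rightarrow> real) \<times> (nat \<Rightarrow> real)) set \<Rightarrow> bool" where
  "inf_rigid d X E \<longleftrightarrow>
     (\<forall>g. framework_motion d X E g \<longrightarrow>
        (\<exists>f. space_motion d f \<and> (\<forall>x\<in>X. g x = f x)))"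

definition lattice_pts :: "nat \<Rightarrow> nat \<Rightarrow> (nat \<Rightarrow> real) set" where
  "lattice_pts d n = {x. (\<forall>i<d. \<exists>k<n. x i = real k) \<and> (\<forall>i\<ge>d. x i = 0)}"

definition lattice_framework ::
  "nat \<Rightarrow> nat \<Rightarrow> (nat \<Rightarrow> real) set \<Rightarrow> ((nat \<Rightarrow> real) \<times> (nat \<Rightarrow> real)) set \<Rightarrow> bool" where
  "lattice_framework d n X E \<longleftrightarrow>
     X = lattice_pts d n \<and> E \<subseteq> {(x, y). x \<in> X \<and> y \<in> X \<and> x \<noteq> y}"

definition slice_joints :: "nat \<Rightarrow> nat \<Rightarrow> (nat \<Rightarrow> real) set \<Rightarrow> (nat \<Rightarrow> real) set" where
  "slice_joints i c X = {x\<in>X. x i = real c}"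

definition slice_bars ::
  "nat \<Rightarrow> nat \<Rightarrow> (nat \<Rightarrow> real) set \<Rightarrow> ((nat \<Rightarrow> real) \<times> (nat \<Rightarrow> real)) set
   \<Rightarrow> ((nat \<Rightarrow> real) \<times> (nat \<Rightarrow> real)) set" where
  "slice_bars i c X E = {(x, y)\<in>E. x \<in> slice_joints i c X \<and> y \<in> slice_joints i c X}"

definition del_coord :: "nat \<Rightarrow> (nat \<Rightarrow> real) \<Rightarrow> (nat \<Rightarrow> real)" where
  "del_coord i x = (\<lambda>j. if j < i then x j else x (Suc j))"

definition proj_joints :: "nat \<Rightarrow> nat \<Rightarrow> (nat \<Rightarrow> real) set \<Rightarrow> (nat \<Rightarrow> real) set" where
  "proj_joints i c X = del_coord i ` slice_joints i c X"

definition proj_bars ::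
  "nat \<Rightarrow> nat \<Rightarrow> (nat \<Rightarrow> real) set \<Rightarrow> ((nat \<Rightarrow> real) \<times> (nat \<Rightarrow> real)) set
   \<Rightarrow> ((nat \<Rightarrow> real) \<times> (nat \<Rightarrow> real)) set" where
  "proj_bars i c X E = (\<lambda>(x, y). (del_coord i x, del_coord i y)) ` slice_bars i c X E"

end

theory Submission
  imports Defs "HOL-Library.Function_Algebras"
begin

text \<open>Let \<open>g\<close> be an infinitesimal motion of the lattice framework and write
  \<open>g(x + e\<^sub>k) - g(x)\<close> for its unit steps. Every infinitesimal motion of space is
  affine with a skew-symmetric linear part, so rigidity of the slice \<open>x\<^sub>i = c\<close>
  makes the \<open>j\<close>-th component of the \<open>k\<close>-th unit step (for \<open>j, k \<noteq> i\<close>) constant on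
  that slice and skew-symmetric in \<open>j, k\<close>. For distinct \<open>i, j, k\<close> the mixed second
  difference \<open>g(e\<^sub>i + e\<^sub>k) - g(e\<^sub>i) - g(e\<^sub>k) + g(0)\<close>, read in coordinate \<open>j\<close>, is
  symmetric in \<open>i, k\<close> and, by the slice \<open>x\<^sub>i = 1\<close> and \<open>x\<^sub>i = 0\<close>, antisymmetric in
  \<open>j, k\<close>; such a quantity vanishes. Hence the \<open>k\<close>-th unit step is the same along
  the \<open>i\<close>-axis, and since \<open>d \<ge> 3\<close> a third index \<open>i\<close> is always available, so all
  unit steps are given by one skew-symmetric matrix \<open>M\<close>. Summing unit steps shows
  \<open>g(x) = g(0) + M x\<close> on the lattice, and this map is an infinitesimal motion of
  space.\<close>

definition unit_vec :: "nat \<Rightarrow> nat \<Rightarrow> real" where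
  "unit_vec k = (\<lambda>l. if l = k then 1 else 0)"

definition unit_step :: "((nat \<Rightarrow> real) \<Rightarrow> (nat \<Rightarrow> real)) \<Rightarrow> nat \<Rightarrow> (nat \<Rightarrow> real) \<Rightarrow> nat \<Rightarrow> real"
  where "unit_step g k x j = g (x + unit_vec k) j - g x j"

section \<open>Infinitesimal motions of space\<close>

lemma ip_unit_vec_right: "j < m \<Longrightarrow> ip m u (unit_vec j) = u j"
  unfolding ip_def unit_vec_def by (simp add: if_distrib[of "\<lambda>t. _ * t"] cong: if_cong)

lemma ip_diff_left: "ip m (u - v) w = ip m u w - ip m v w"
  unfolding ip_def by (simp add: algebra_simps sum_subtractf)

lemma ip_diff_right: "ip m w (u - v) = ip m w u - ip m w v"
  unfolding ip_def by (simp add: algebra_simps sum_subtractf)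

lemma ip_add_right: "ip m w (u + v) = ip m w u + ip m w v"
  unfolding ip_def by (simp add: algebra_simps sum.distrib)

lemma unit_vec_rvec: "j < m \<Longrightarrow> unit_vec j \<in> rvec m"
  by (simp add: rvec_def unit_vec_def)

lemma space_motion_polarization:
  assumes f: "space_motion m f" and x: "x \<in> rvec m" and y: "y \<in> rvec m"
  shows "ip m (f x - f 0) y + ip m (f y - f 0) x = 0"
proof -
  have zero: "0 \<in> rvec m" by (simp add: rvec_def)
  have orth: "ip m (f u - f v) (u - v) = 0" if "u \<in> rvec m" "v \<in> rvec m" for u v
    using f that by (simp add: space_motion_def)
  have "ip m (f x - f y) (x - y) = ip m (f x - f 0) (x - 0) + ip m (f y - f 0) (y - 0)
      - (ip m (f x - f 0) y + ip m (f y - f 0) x)"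
    by (simp add: ip_diff_left ip_diff_right)
  then show ?thesis using orth[OF x y] orth[OF x zero] orth[OF y zero] by simp
qed

lemma space_motion_additive:
  assumes f: "space_motion m f" and y: "y \<in> rvec m" and z: "z \<in> rvec m" and j: "j < m"
  shows "f (y + z) j - f y j = f z j - f 0 j"
proof -
  have e: "unit_vec j \<in> rvec m" using j by (rule unit_vec_rvec)
  have yz: "y + z \<in> rvec m" using y z by (simp add: rvec_def)
  have "ip m (f (y + z) - f 0) (unit_vec j) = ip m (f y - f 0) (unit_vec j) + ip m (f z - f 0) (unit_vec j)"
    using space_motion_polarization[OF f yz e] space_motion_polarization[OF f y e]
      space_motion_polarization[OF f z e]
    by (simp add: ip_add_right)
  then show ?thesis using j by (simp add: ip_unit_vec_right)
qed

lemma space_motion_skew: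
  assumes f: "space_motion m f" and j: "j < m" and k: "k < m"
  shows "f (unit_vec k) j - f 0 j = - (f (unit_vec j) k - f 0 k)"
proof -
  have "ip m (f (unit_vec k) - f 0) (unit_vec j) + ip m (f (unit_vec j) - f 0) (unit_vec k) = 0"
    using f j k by (intro space_motion_polarization unit_vec_rvec)
  then show ?thesis using j k by (simp add: ip_unit_vec_right)
qed

lemma skew_quadratic_form_zero:
  assumes skew: "\<And>j k. j < d \<Longrightarrow> k < d \<Longrightarrow> M j k = - M k j"
  shows "(\<Sum>j<d. (\<Sum>k<d. M j k * w k) * w j) = (0::real)"
proof -
  let ?S = "\<Sum>j<d. \<Sum>k<d. M j k * w k * w j"
  have "?S = (\<Sum>k<d. \<Sum>j<d. M j k * w k * w j)" by (rule sum.swap)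
  also have "\<dots> = (\<Sum>k<d. \<Sum>j<d. - (M k j * w j * w k))"
  proof (intro sum.cong refl)
    fix k j assume "k \<in> {..<d}" "j \<in> {..<d}"
    then have "M j k = - M k j" by (intro skew) simp_all
    then show "M j k * w k * w j = - (M k j * w j * w k)" by simp
  qed
  also have "\<dots> = - ?S" by (simp add: sum_negf)
  finally have "?S = 0" by simp
  then show ?thesis by (simp add: sum_distrib_right)
qed

lemma space_motion_affine_skew:
  assumes "\<And>j k. j < d \<Longrightarrow> k < d \<Longrightarrow> M j k = - M k j"
  shows "space_motion d (\<lambda>x j. if j < d then b j + ip d (M j) x else 0)" (is "space_motion d ?f")
  unfolding space_motion_def
proof (intro conjI ballI)
  fix x y :: "nat \<Rightarrow> real"
  have "ip d (?f x - ?f y) (x - y) = (\<Sum>j<d. (\<Sum>k<d. M j k * (x - y) k) * (x - y) j)"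
    unfolding ip_def by (intro sum.cong refl) (simp add: sum_subtractf algebra_simps)
  also have "\<dots> = 0" using assms by (rule skew_quadratic_form_zero)
  finally show "ip d (?f x - ?f y) (x - y) = 0" .
qed (simp add: rvec_def)

section \<open>Deleting a coordinate\<close>

definition del_index :: "nat \<Rightarrow> nat \<Rightarrow> nat" where
  "del_index i j = (if j < i then j else j - 1)"

definition ins_coord :: "nat \<Rightarrow> real \<Rightarrow> (nat \<Rightarrow> real) \<Rightarrow> (nat \<Rightarrow> real)" where
  "ins_coord i c y = (\<lambda>j. if j < i then y j else if j = i then c else y (j - 1))"

lemma del_coord_del_index: "j \<noteq> i \<Longrightarrow> del_coord i u (del_index i j) = u j"
  by (auto simp: del_coord_def del_index_def)

lemma del_index_less: "j \<noteq> i \<Longrightarrow> j < d \<Longrightarrow> i < d \<Longrightarrow> del_index i j < d - 1"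
  by (auto simp: del_index_def)

lemma ins_coord_del_coord: "x i = c \<Longrightarrow> ins_coord i c (del_coord i x) = x"
  by (auto simp: del_coord_def ins_coord_def fun_eq_iff)

lemma del_coord_diff: "del_coord i (u - v) = del_coord i u - del_coord i v"
  by (auto simp: del_coord_def)

lemma del_coord_add_unit_vec:
  "k \<noteq> i \<Longrightarrow> del_coord i (x + unit_vec k) = del_coord i x + unit_vec (del_index i k)"
  by (auto simp: del_coord_def unit_vec_def del_index_def fun_eq_iff)

lemma del_coord_rvec: "x \<in> rvec d \<Longrightarrow> i < d \<Longrightarrow> del_coord i x \<in> rvec (d - 1)"
  by (auto simp: rvec_def del_coord_def)

lemma sum_lessThan_skip:
  "i \<le> m \<Longrightarrow> (\<Sum>j<m. f (if j < i then j else Suc j)) = (\<Sum>j<Suc m. f j) - (f i :: real)"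
proof (induction m)
  case (Suc m)
  then show ?case by (cases "i = Suc m") auto
qed simp

lemma ip_del_coord:
  assumes "i < d"
  shows "ip (d - 1) (del_coord i u) (del_coord i v) = ip d u v - u i * v i"
proof -
  obtain m where d: "d = Suc m" using assms by (cases d) auto
  have "ip (d - 1) (del_coord i u) (del_coord i v) = (\<Sum>j<m. (\<lambda>l. u l * v l) (if j < i then j else Suc j))"
    unfolding ip_def d by (rule sum.cong) (auto simp: del_coord_def)
  also have "\<dots> = ip d u v - u i * v i"
    using assms unfolding d ip_def by (subst sum_lessThan_skip) auto
  finally show ?thesis .
qed

lemma framework_motion_proj:
  assumes g: "framework_motion d X E g" and i: "i < d"
  shows "framework_motion (d - 1) (proj_joints i c X) (proj_bars i c X E)
           (\<lambda>y. del_coord i (g (ins_coord i (real c) y)))"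
  unfolding framework_motion_def
proof (intro conjI ballI)
  fix y assume "y \<in> proj_joints i c X"
  then obtain x where x: "x \<in> X" "x i = real c" "y = del_coord i x"
    by (auto simp: proj_joints_def slice_joints_def)
  have "g x \<in> rvec d" using g x by (simp add: framework_motion_def)
  then show "del_coord i (g (ins_coord i (real c) y)) \<in> rvec (d - 1)"
    using x i del_coord_rvec[of "g x" d i] by (simp add: ins_coord_del_coord)
next
  fix p assume "p \<in> proj_bars i c X E"
  then obtain x y where p: "p = (del_coord i x, del_coord i y)" and xy: "(x, y) \<in> E"
    and c: "x i = real c" "y i = real c"
    by (auto simp: proj_bars_def slice_bars_def slice_joints_def)
  have "ip d (g x - g y) (x - y) = 0" using g xy by (auto simp: framework_motion_def)
  then have "ip (d - 1) (del_coord i (g x - g y)) (del_coord i (x - y)) = 0"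
    using c ip_del_coord[OF i, of "g x - g y" "x - y"] by simp
  then show "case p of (y1, y2) \<Rightarrow>
      ip (d - 1) (del_coord i (g (ins_coord i (real c) y1)) - del_coord i (g (ins_coord i (real c) y2))) (y1 - y2) = 0"
    using p c by (simp add: ins_coord_del_coord del_coord_diff)
qed

lemma rigid_slice_unit_step:
  assumes X: "X \<subseteq> rvec d" and g: "framework_motion d X E g" and i: "i < d"
    and rigid: "inf_rigid (d - 1) (proj_joints i c X) (proj_bars i c X E)"
  obtains f where "space_motion (d - 1) f"
    and "\<And>x j k. x \<in> X \<Longrightarrow> x i = real c \<Longrightarrow> x + unit_vec k \<in> X \<Longrightarrow>
           j < d \<Longrightarrow> k < d \<Longrightarrow> j \<noteq> i \<Longrightarrow> k \<noteq> i \<Longrightarrow>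
           unit_step g k x j = f (unit_vec (del_index i k)) (del_index i j) - f 0 (del_index i j)"
proof -
  obtain f where f: "space_motion (d - 1) f"
    and agree: "\<And>y. y \<in> proj_joints i c X \<Longrightarrow> del_coord i (g (ins_coord i (real c) y)) = f y"
    using rigid framework_motion_proj[OF g i] unfolding inf_rigid_def by blast
  have step: "unit_step g k x j = f (unit_vec (del_index i k)) (del_index i j) - f 0 (del_index i j)"
    if x: "x \<in> X" "x i = real c" "x + unit_vec k \<in> X"
      and jk: "j < d" "k < d" "j \<noteq> i" "k \<noteq> i" for x j k
  proof -
    have xk: "(x + unit_vec k) i = real c" using x jk by (simp add: unit_vec_def)
    have joint: "del_coord i z \<in> proj_joints i c X" if "z \<in> X" "z i = real c" for z
      using that by (auto simp: proj_joints_def slice_joints_def)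
    have g_del: "del_coord i (g z) = f (del_coord i z)" if "z \<in> X" "z i = real c" for z
      using agree[OF joint[OF that]] that(2) by (simp add: ins_coord_del_coord)
    have "unit_step g k x j
        = f (del_coord i x + unit_vec (del_index i k)) (del_index i j) - f (del_coord i x) (del_index i j)"
      unfolding unit_step_def
      using g_del[OF x(1,2)] g_del[OF x(3) xk] del_coord_del_index[of j i] jk
      by (metis del_coord_add_unit_vec)
    also have "\<dots> = f (unit_vec (del_index i k)) (del_index i j) - f 0 (del_index i j)"
      using x X i jk
      by (intro space_motion_additive[OF f] del_coord_rvec unit_vec_rvec del_index_less) auto
    finally show ?thesis .
  qed
  show ?thesis using that f step by blast
qed

section \<open>Lattice points\<close>

lemma lattice_pts_rvec: "lattice_pts d n \<subseteq> rvec d"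
  by (auto simp: lattice_pts_def rvec_def)

lemma lattice_pts_coord: "x \<in> lattice_pts d n \<Longrightarrow> l < d \<Longrightarrow> \<exists>c<n. x l = real c"
  by (simp add: lattice_pts_def)

lemma lattice_pts_zero: "0 < n \<Longrightarrow> 0 \<in> lattice_pts d n"
  by (auto simp: lattice_pts_def intro: exI[of _ 0])

lemma lattice_pts_update:
  "x \<in> lattice_pts d n \<Longrightarrow> i < d \<Longrightarrow> c < n \<Longrightarrow> x(i := real c) \<in> lattice_pts d n"
  by (auto simp: lattice_pts_def)

lemma add_unit_vec_eq_update: "x k = real c \<Longrightarrow> x + unit_vec k = x(k := real (Suc c))"
  by (auto simp: unit_vec_def fun_eq_iff)

lemma lattice_pts_add_unit_vec:
  "x \<in> lattice_pts d n \<Longrightarrow> k < d \<Longrightarrow> x k = real c \<Longrightarrow> Suc c < n \<Longrightarrow> x + unit_vec k \<in> lattice_pts d n"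
  by (metis add_unit_vec_eq_update lattice_pts_update)

lemma lattice_unit_steps_affine:
  assumes steps: "\<And>x k. x \<in> lattice_pts d n \<Longrightarrow> x + unit_vec k \<in> lattice_pts d n \<Longrightarrow> k < d \<Longrightarrow>
                    unit_step g k x j = M k"
    and x: "x \<in> lattice_pts d n"
  shows "g x j = g 0 j + ip d M x"
proof -
  have "\<forall>x\<in>lattice_pts d n. (\<Sum>l<d. x l) = real t \<longrightarrow> g x j = g 0 j + ip d M x" for t
  proof (induction t)
    case 0
    show ?case
    proof (intro ballI impI)
      fix x assume x: "x \<in> lattice_pts d n" and sum: "(\<Sum>l<d. x l) = real 0"
      have "\<forall>l<d. x l \<ge> 0" using x by (auto simp: lattice_pts_def)
      then have "\<forall>l<d. x l = 0" using sum sum_nonneg_eq_0_iff[of "{..<d}" x] by auto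
      then have "x = 0" using x by (auto simp: lattice_pts_def fun_eq_iff intro: leI)
      moreover have "ip d M 0 = 0" by (simp add: ip_def)
      ultimately show "g x j = g 0 j + ip d M x" by simp
    qed
  next
    case (Suc t)
    show ?case
    proof (intro ballI impI)
      fix x assume x: "x \<in> lattice_pts d n" and sum: "(\<Sum>l<d. x l) = real (Suc t)"
      have "\<exists>k<d. x k \<noteq> 0"
        using sum by (metis (mono_tags, lifting) lessThan_iff of_nat_0 nat.distinct(1) of_nat_eq_iff sum.neutral)
      then obtain k c where k: "k < d" and c: "x k = real (Suc c)"
        using lattice_pts_coord[OF x] by (metis not0_implies_Suc of_nat_0)
      define y where "y = x(k := real c)"
      have y: "y \<in> lattice_pts d n" unfolding y_def
        using x k c lattice_pts_coord[OF x k] by (intro lattice_pts_update) auto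
      have xy: "y + unit_vec k = x"
        using c unfolding y_def by (subst add_unit_vec_eq_update) auto
      have "(\<Sum>l<d. y l) = real t"
        using sum c k by (simp add: y_def sum.remove[of "{..<d}" k] algebra_simps)
      then have "g y j = g 0 j + ip d M y" using Suc.IH y by blast
      moreover have "g x j = g y j + M k" using steps[OF y _ k] xy x by (simp add: unit_step_def)
      moreover have "ip d M x = ip d M y + M k" using xy k by (metis ip_add_right ip_unit_vec_right)
      ultimately show "g x j = g 0 j + ip d M x" by simp
    qed
  qed
  moreover obtain c where "\<And>l. l < d \<Longrightarrow> x l = real (c l)"
    using lattice_pts_coord[OF x] by metis
  then have "(\<Sum>l<d. x l) = real (\<Sum>l<d. c l)" by simp
  ultimately show ?thesis using x by blast
qed

section \<open>Unit steps of lattice motions\<close>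

locale lattice_slice_steps =
  fixes d n :: nat and g :: "(nat \<Rightarrow> real) \<Rightarrow> (nat \<Rightarrow> real)"
  assumes three_le_dim: "3 \<le> d" and two_le_size: "2 \<le> n"
    and slice_const: "\<And>i j k x y. \<lbrakk>i < d; j < d; k < d; j \<noteq> i; k \<noteq> i;
      x \<in> lattice_pts d n; y \<in> lattice_pts d n; x i = y i;
      x + unit_vec k \<in> lattice_pts d n; y + unit_vec k \<in> lattice_pts d n\<rbrakk>
      \<Longrightarrow> unit_step g k x j = unit_step g k y j"
    and slice_skew: "\<And>i j k x y. \<lbrakk>i < d; j < d; k < d; j \<noteq> i; k \<noteq> i;
      x \<in> lattice_pts d n; y \<in> lattice_pts d n; x i = y i;
      x + unit_vec k \<in> lattice_pts d n; y + unit_vec j \<in> lattice_pts d n\<rbrakk>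
      \<Longrightarrow> unit_step g k x j = - unit_step g j y k"
begin

abbreviation L where "L \<equiv> lattice_pts d n"

lemma third_index:
  obtains i where "i < d" "i \<noteq> j" "i \<noteq> k"
proof -
  have "\<exists>i<3. i \<noteq> j \<and> i \<noteq> k" by presburger
  then show thesis using three_le_dim that by (meson less_le_trans)
qed

lemma zero_mem: "0 \<in> L"
  using lattice_pts_zero two_le_size by simp

lemma add_unit_vec_mem: "x \<in> L \<Longrightarrow> k < d \<Longrightarrow> x k = 0 \<Longrightarrow> x + unit_vec k \<in> L"
  using lattice_pts_add_unit_vec[of x d n k 0] two_le_size by simp

lemma unit_vec_mem: "k < d \<Longrightarrow> unit_vec k \<in> L"
  using add_unit_vec_mem[OF zero_mem] by simp

lemma unit_step_diag:
  assumes "x \<in> L" "x + unit_vec k \<in> L" "k < d"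
  shows "unit_step g k x k = 0"
proof -
  obtain i where "i < d" "i \<noteq> k" using third_index by blast
  then show ?thesis using slice_skew[of i k k x x] assms by simp
qed

lemma unit_step_skew: "j < d \<Longrightarrow> k < d \<Longrightarrow> unit_step g k 0 j = - unit_step g j 0 k"
  by (rule third_index[of j k]) (simp add: slice_skew zero_mem unit_vec_mem)

lemma mixed_second_difference_zero:
  assumes "i < d" "j < d" "k < d" "i \<noteq> j" "i \<noteq> k" "j \<noteq> k"
  shows "unit_step g k (unit_vec i) j = unit_step g k 0 j"
proof -
  define \<sigma> where "\<sigma> j i k = unit_step g k (unit_vec i) j - unit_step g k 0 j" for j i k
  have sym: "\<sigma> j i k = \<sigma> j k i" for j i k
    unfolding \<sigma>_def unit_step_def by (simp add: add.commute)
  have anti: "\<sigma> a b c = - \<sigma> c b a" if "a < d" "b < d" "c < d" "a \<noteq> b" "c \<noteq> b" for a b c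
  proof -
    have "unit_vec b + unit_vec a \<in> L" "unit_vec b + unit_vec c \<in> L"
      using that by (intro add_unit_vec_mem unit_vec_mem; simp add: unit_vec_def)+
    then have "unit_step g c (unit_vec b) a = - unit_step g a (unit_vec b) c"
      using that by (intro slice_skew) (simp_all add: unit_vec_mem)
    moreover have "unit_step g c 0 a = - unit_step g a 0 c"
      using that by (intro slice_skew) (simp_all add: zero_mem unit_vec_mem)
    ultimately show ?thesis unfolding \<sigma>_def by simp
  qed
  have "\<sigma> j i k = - \<sigma> i k j" using sym anti assms by metis
  also have "\<dots> = \<sigma> k j i" using sym anti assms by metis
  also have "\<dots> = - \<sigma> j i k" using sym anti assms by metis
  finally show ?thesis unfolding \<sigma>_def by simp
qed

lemma unit_step_const_on_axis:
  assumes ijk: "i < d" "j < d" "k < d" "i \<noteq> j" "i \<noteq> k" "j \<noteq> k"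
  shows "c < n \<Longrightarrow> unit_step g k (0(i := real c)) j = unit_step g k 0 j"
proof (induction c)
  case 0
  have "(0 :: nat \<Rightarrow> real)(i := real 0) = 0" by (simp add: fun_eq_iff)
  then show ?case by (simp only:)
next
  case (Suc c)
  define p :: "nat \<Rightarrow> real" where "p = 0(i := real c)"
  have p: "p \<in> L" "p k = 0" "p + unit_vec i = 0(i := real (Suc c))"
    using Suc.prems ijk zero_mem by (simp_all add: p_def lattice_pts_update add_unit_vec_eq_update)
  have pi: "p + unit_vec i \<in> L"
    unfolding p(3) by (intro lattice_pts_update zero_mem ijk(1) Suc.prems)
  have pk: "p + unit_vec k \<in> L" using p ijk by (simp add: add_unit_vec_mem)
  have pki: "p + unit_vec k + unit_vec i \<in> L"
    using pk Suc.prems ijk unfolding p_def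
    by (intro lattice_pts_add_unit_vec[of _ d n i c]) (simp_all add: unit_vec_def)
  have ki: "unit_vec k + unit_vec i \<in> L" "0 + unit_vec i \<in> L"
    using ijk by (intro add_unit_vec_mem unit_vec_mem zero_mem; simp add: unit_vec_def)+
  have "unit_step g k (p + unit_vec i) j - unit_step g k p j
      = unit_step g i (p + unit_vec k) j - unit_step g i p j"
    unfolding unit_step_def by (simp add: ac_simps)
  \<comment> \<open>\<open>p + e\<^sub>k\<close> and \<open>e\<^sub>k\<close> lie in the slice \<open>x\<^sub>k = 1\<close>, \<open>p\<close> and \<open>0\<close> in the slice \<open>x\<^sub>k = 0\<close>\<close>
  also have "unit_step g i (p + unit_vec k) j = unit_step g i (unit_vec k) j"
    using ijk p pk pki ki unit_vec_mem[OF ijk(3)]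
    by (intro slice_const[of k]) (simp_all add: unit_vec_def)
  also have "unit_step g i p j = unit_step g i 0 j"
    using ijk p pi ki by (intro slice_const[of k]) (simp_all add: zero_mem)
  also have "unit_step g i (unit_vec k) j - unit_step g i 0 j = 0"
    using mixed_second_difference_zero[of k j i] ijk by simp
  finally have "unit_step g k (p + unit_vec i) j = unit_step g k p j"
    by (rule eq_iff_diff_eq_0[THEN iffD2])
  then have "unit_step g k (0(i := real (Suc c))) j = unit_step g k (0(i := real c)) j"
    unfolding p(3) unfolding p_def .
  also have "\<dots> = unit_step g k 0 j" using Suc.prems by (intro Suc.IH) simp
  finally show ?case .
qed

lemma unit_step_const:
  assumes x: "x \<in> L" "x + unit_vec k \<in> L" and jk: "j < d" "k < d"
  shows "unit_step g k x j = unit_step g k 0 j"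
proof (cases "j = k")
  case True
  then show ?thesis
    using unit_step_diag[OF x jk(2)] unit_step_diag[OF zero_mem _ jk(2)] unit_vec_mem[OF jk(2)]
    by simp
next
  case False
  obtain i where i: "i < d" "i \<noteq> j" "i \<noteq> k" using third_index by blast
  obtain c where c: "c < n" "x i = real c" using lattice_pts_coord[OF x(1) i(1)] by blast
  have "(0(i := real c)) + unit_vec k \<in> L"
    using i c jk by (intro add_unit_vec_mem lattice_pts_update zero_mem) simp_all
  then have "unit_step g k x j = unit_step g k (0(i := real c)) j"
    using x i c jk by (intro slice_const[of i]) (simp_all add: lattice_pts_update zero_mem)
  also have "\<dots> = unit_step g k 0 j"
    using unit_step_const_on_axis i jk False c by simp
  finally show ?thesis .
qed

end

lemma lattice_slice_steps_if_rigid_slices: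
  assumes "3 \<le> d" "2 \<le> n" and F: "lattice_framework d n X E"
    and rigid: "\<forall>i<d. \<forall>c<n. inf_rigid (d - 1) (proj_joints i c X) (proj_bars i c X E)"
    and g: "framework_motion d X E g"
  shows "lattice_slice_steps d n g"
proof (unfold_locales)
  have X: "X = lattice_pts d n" using F by (simp add: lattice_framework_def)
  then have X_rvec: "X \<subseteq> rvec d" using lattice_pts_rvec by simp
  fix i j k x y
  assume ijk: "i < d" "j < d" "k < d" "j \<noteq> i" "k \<noteq> i"
    and xy: "x \<in> lattice_pts d n" "y \<in> lattice_pts d n" "x i = y i"
  obtain c where c: "c < n" "x i = real c" using lattice_pts_coord[of x d n i] ijk(1) xy(1) by auto
  have "inf_rigid (d - 1) (proj_joints i c X) (proj_bars i c X E)" using rigid ijk(1) c(1) by blast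
  then obtain f where f: "space_motion (d - 1) f"
    and step: "\<And>z j k. z \<in> X \<Longrightarrow> z i = real c \<Longrightarrow> z + unit_vec k \<in> X \<Longrightarrow>
      j < d \<Longrightarrow> k < d \<Longrightarrow> j \<noteq> i \<Longrightarrow> k \<noteq> i \<Longrightarrow>
      unit_step g k z j = f (unit_vec (del_index i k)) (del_index i j) - f 0 (del_index i j)"
    using rigid_slice_unit_step[OF X_rvec g ijk(1)] by blast
  show "unit_step g k x j = unit_step g k y j"
    if "x + unit_vec k \<in> lattice_pts d n" "y + unit_vec k \<in> lattice_pts d n"
    using step[where z = x] step[where z = y] that ijk xy c X by simp
  have "del_index i j < d - 1" "del_index i k < d - 1" using ijk del_index_less by blast+
  note skew = space_motion_skew[OF f this]
  show "unit_step g k x j = - unit_step g j y k"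
    if "x + unit_vec k \<in> lattice_pts d n" "y + unit_vec j \<in> lattice_pts d n"
    using step[where z = x and j = j and k = k] step[where z = y and j = k and k = j] skew that ijk xy c X
    by simp
qed (use assms in auto)

theorem corollary7:
  fixes d n :: nat
    and X :: "(nat \<Rightarrow> real) set"
    and E :: "((nat \<Rightarrow> real) \<times> (nat \<Rightarrow> real)) set"
  assumes "d \<ge> 3" and "n \<ge> 2"
    and "lattice_framework d n X E"
    and "\<forall>i<d. \<forall>c<n. inf_rigid (d - 1) (proj_joints i c X) (proj_bars i c X E)"
  shows "inf_rigid d X E"
  unfolding inf_rigid_def
proof (intro allI impI)
  fix g assume g: "framework_motion d X E g"
  have X: "X = lattice_pts d n" using assms(3) by (simp add: lattice_framework_def)
  interpret lattice_slice_steps d n g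
    using lattice_slice_steps_if_rigid_slices[OF assms g] .
  define M where "M j k = unit_step g k 0 j" for j k
  define f where "f = (\<lambda>x j. if j < d then g 0 j + ip d (M j) x else 0)"
  have "space_motion d f"
    unfolding f_def M_def by (intro space_motion_affine_skew unit_step_skew)
  moreover have "g x j = f x j" if x: "x \<in> X" for x j
  proof (cases "j < d")
    case True
    have "g x j = g 0 j + ip d (M j) x"
      unfolding M_def using x X True by (intro lattice_unit_steps_affine unit_step_const) simp_all
    then show ?thesis using True by (simp add: f_def)
  next
    case False
    then show ?thesis using g x by (simp add: framework_motion_def rvec_def f_def)
  qed
  ultimately show "\<exists>f. space_motion d f \<and> (\<forall>x\<in>X. g x = f x)" by blast
qed

end
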